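(* Let $(S,T)$ be bivariate normal with standard normal margins and correlation $\rho\in(-1,1)$, and let $A = \sqrt{2\pi}\,S$, $B = \sqrt{2\pi}\,T$. Then $\mathbb E[\max(A,0)] = \mathbb E[\max(B,0)] = 1$ and for $(x,y)\in[0,\infty)^2$ with $x+y>0$, \[ \mathbb E[\max(xA, yB, 0)] = \frac12(x+y)\Biggl(1 + \sqrt{1 - 2(\rho+1)\frac{xy}{(x+y)^2}}\Biggr). \] Equivalently the Pickands function $D_\rho(t) = \ell_\rho(1-t,t)$ equals $\frac12\{1 + \sqrt{1 - 2(\rho+1)t(1-t)}\}$, $t\in[0,1]$. *)

theory Defs
  imports "HOL-Probability.Probability"
begin

definition binorm_density :: "real \<Rightarrow> real \<times> real \<Rightarrow> real" where
  "binorm_density \<rho> = (\<lambda>(s, t). exp (- (s\<^sup>2 - 2 * \<rho> * s * t + t\<^sup>2) / (2 * (1 - \<rho>\<^sup>2)))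
        / (2 * pi * sqrt (1 - \<rho>\<^sup>2)))"

end

theory Submission
  imports Defs
begin

text \<open>Let (S, T) have the standard bivariate normal law with correlation rho, -1 < rho < 1.
  The proof rests on two facts about this law.
  (1) Every linear combination u S + v T is centred normal with variance
      u^2 + 2 rho u v + v^2.  We factor the density into the marginal of S and the conditional
      law of T given S, substitute in the inner integral, and average the resulting normal
      density over S (a Gaussian convolution).  Hence E |u S + v T| is explicit.
  (2) The law is symmetric under (S, T) to (-S, -T).
  Since max(a, b, 0) + max(-a, -b, 0) = (|a| + |b| + |a - b|) / 2, symmetry turns
  2 E max(a S, b T, 0) into a sum of three absolute moments of linear combinations, which gives
  E max(a S, b T, 0) = (|a| + |b| + sqrt (a^2 - 2 rho a b + b^2)) / (2 sqrt (2 pi)).\<close>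

definition lincomb_variance :: "real \<Rightarrow> real \<Rightarrow> real \<Rightarrow> real" where
  "lincomb_variance \<rho> u v = u\<^sup>2 + 2 * \<rho> * u * v + v\<^sup>2"

lemma lincomb_variance_eq: "lincomb_variance \<rho> u v = (u + \<rho> * v)\<^sup>2 + (1 - \<rho>\<^sup>2) * v\<^sup>2"
  unfolding lincomb_variance_def by (simp add: power2_eq_square algebra_simps)

lemma lincomb_variance_pos:
  assumes "\<bar>\<rho>\<bar> < 1" and "u \<noteq> 0 \<or> v \<noteq> 0"
  shows "0 < lincomb_variance \<rho> u v"
proof (cases "v = 0")
  case True
  with assms show ?thesis by (simp add: lincomb_variance_def)
next
  case False
  have "0 < 1 - \<rho>\<^sup>2" using assms by (simp add: abs_square_less_1)
  with False show ?thesis unfolding lincomb_variance_eq by (intro add_nonneg_pos) simp_all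
qed

lemma lincomb_variance_nonneg:
  assumes "\<bar>\<rho>\<bar> < 1"
  shows "0 \<le> lincomb_variance \<rho> u v"
  using lincomb_variance_pos[OF assms, of u v] by (cases "u = 0 \<and> v = 0") (auto simp: lincomb_variance_def)

lemma normal_density_rescale:
  assumes "a \<noteq> 0" "0 < \<sigma>"
  shows "\<bar>a\<bar> * normal_density (b + a * \<mu>) (\<bar>a\<bar> * \<sigma>) (b + a * x) = normal_density \<mu> \<sigma> x"
  using assms
  by (simp add: normal_density_def real_sqrt_mult field_simps) (simp add: power2_eq_square field_simps)

lemma nn_integral_normal_affine:
  fixes g :: "real \<Rightarrow> ennreal"
  assumes g[measurable]: "g \<in> borel_measurable borel" and a: "a \<noteq> 0" and \<sigma>: "0 < \<sigma>"
  shows "(\<integral>\<^sup>+x. normal_density \<mu> \<sigma> x * g (b + a * x) \<partial>lborel)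
       = (\<integral>\<^sup>+y. normal_density (b + a * \<mu>) (\<bar>a\<bar> * \<sigma>) y * g y \<partial>lborel)"
proof -
  have "(\<integral>\<^sup>+y. normal_density (b + a * \<mu>) (\<bar>a\<bar> * \<sigma>) y * g y \<partial>lborel)
      = \<bar>a\<bar> * (\<integral>\<^sup>+x. normal_density (b + a * \<mu>) (\<bar>a\<bar> * \<sigma>) (b + a * x) * g (b + a * x) \<partial>lborel)"
    by (rule nn_integral_real_affine[OF _ a]) simp
  also have "\<dots> = (\<integral>\<^sup>+x. ennreal (\<bar>a\<bar> * normal_density (b + a * \<mu>) (\<bar>a\<bar> * \<sigma>) (b + a * x)) * g (b + a * x) \<partial>lborel)"
    by (subst nn_integral_cmult[symmetric]) (simp_all add: ennreal_mult mult.assoc)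
  also have "\<dots> = (\<integral>\<^sup>+x. normal_density \<mu> \<sigma> x * g (b + a * x) \<partial>lborel)"
    by (simp only: normal_density_rescale[OF a \<sigma>])
  finally show ?thesis ..
qed

lemma normal_density_shift: "normal_density \<mu> \<sigma> x = normal_density 0 \<sigma> (x - \<mu>)"
  by (simp add: normal_density_def)

text \<open>Gaussian mixture: averaging the law N(c s, tau) over a standard normal s yields
  N(0, sqrt (c^2 + tau^2)); for c different from 0 this is the convolution of two centred normals.\<close>
lemma nn_integral_normal_mixture:
  assumes \<tau>: "0 < \<tau>"
  shows "(\<integral>\<^sup>+s. std_normal_density s * normal_density (c * s) \<tau> w \<partial>lborel)
       = normal_density 0 (sqrt (c\<^sup>2 + \<tau>\<^sup>2)) w"
proof (cases "c = 0")
  case True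
  have "(\<integral>\<^sup>+s. std_normal_density s * normal_density (c * s) \<tau> w \<partial>lborel)
      = (\<integral>\<^sup>+s. std_normal_density s * ennreal (normal_density 0 \<tau> w) \<partial>lborel)"
    using True by (simp add: ennreal_mult)
  also have "\<dots> = (\<integral>\<^sup>+s. std_normal_density s \<partial>lborel) * normal_density 0 \<tau> w"
    by (rule nn_integral_multc) simp
  also have "(\<integral>\<^sup>+s. std_normal_density s \<partial>lborel) = 1"
    by (subst nn_integral_eq_integral) auto
  finally show ?thesis using True \<tau> by simp
next
  case False
  have "(\<integral>\<^sup>+s. std_normal_density s * normal_density (c * s) \<tau> w \<partial>lborel)
      = (\<integral>\<^sup>+s. std_normal_density s * ennreal (normal_density 0 \<tau> (w - (0 + c * s))) \<partial>lborel)"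
    using normal_density_shift[of "c * s" \<tau> w for s] by (simp add: ennreal_mult)
  also have "\<dots> = (\<integral>\<^sup>+y. normal_density 0 \<bar>c\<bar> y * ennreal (normal_density 0 \<tau> (w - y)) \<partial>lborel)"
    using nn_integral_normal_affine[OF _ False, where \<sigma>=1 and \<mu>=0 and b=0 and g="\<lambda>y. ennreal (normal_density 0 \<tau> (w - y))"]
    by simp
  also have "\<dots> = (\<integral>\<^sup>+y. ennreal (normal_density 0 \<tau> (w - y) * normal_density 0 \<bar>c\<bar> y) \<partial>lborel)"
    by (simp add: ennreal_mult mult.commute)
  also have "\<dots> = normal_density 0 (sqrt (\<tau>\<^sup>2 + \<bar>c\<bar>\<^sup>2)) w"
    using conv_normal_density_zero_mean[OF \<tau>, of "\<bar>c\<bar>"] False by (simp add: fun_eq_iff)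
  finally show ?thesis by (simp add: add.commute)
qed

lemma binorm_density_factor:
  assumes "\<bar>\<rho>\<bar> < 1"
  shows "binorm_density \<rho> (s, t) = std_normal_density s * normal_density (\<rho> * s) (sqrt (1 - \<rho>\<^sup>2)) t"
proof -
  have q: "0 < 1 - \<rho>\<^sup>2" using assms by (simp add: abs_square_less_1)
  have exponent: "- s\<^sup>2 / 2 + - (t - \<rho> * s)\<^sup>2 / (2 * (1 - \<rho>\<^sup>2))
      = - (s\<^sup>2 - 2 * \<rho> * s * t + t\<^sup>2) / (2 * (1 - \<rho>\<^sup>2))"
    using q by (simp add: field_simps power2_eq_square)
  have "sqrt (2 * pi) * sqrt (2 * pi * (1 - \<rho>\<^sup>2)) = (sqrt (2 * pi) * sqrt (2 * pi)) * sqrt (1 - \<rho>\<^sup>2)"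
    by (simp add: real_sqrt_mult)
  then have normalizer: "1 / sqrt (2 * pi) * (1 / sqrt (2 * pi * (1 - \<rho>\<^sup>2))) = 1 / (2 * pi * sqrt (1 - \<rho>\<^sup>2))"
    by simp
  have "std_normal_density s * normal_density (\<rho> * s) (sqrt (1 - \<rho>\<^sup>2)) t
     = (1 / sqrt (2 * pi) * (1 / sqrt (2 * pi * (1 - \<rho>\<^sup>2))))
       * exp (- s\<^sup>2 / 2 + - (t - \<rho> * s)\<^sup>2 / (2 * (1 - \<rho>\<^sup>2)))"
    unfolding std_normal_density_def normal_density_def using q by (simp add: mult_exp_exp)
  also have "\<dots> = binorm_density \<rho> (s, t)"
    unfolding normalizer exponent binorm_density_def by simp
  finally show ?thesis ..
qed

lemma binorm_density_even: "binorm_density \<rho> (- s, - t) = binorm_density \<rho> (s, t)"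
  by (simp add: binorm_density_def)

lemma borel_measurable_binorm_density[measurable]:
  "binorm_density \<rho> \<in> borel_measurable (lborel \<Otimes>\<^sub>M lborel)"
  unfolding binorm_density_def by measurable

lemma nn_integral_binorm_iterated:
  fixes g :: "real \<times> real \<Rightarrow> ennreal"
  assumes "\<bar>\<rho>\<bar> < 1" and [measurable]: "g \<in> borel_measurable (lborel \<Otimes>\<^sub>M lborel)"
  shows "(\<integral>\<^sup>+p. binorm_density \<rho> p * g p \<partial>(lborel \<Otimes>\<^sub>M lborel))
     = (\<integral>\<^sup>+s. std_normal_density s *
          (\<integral>\<^sup>+t. normal_density (\<rho> * s) (sqrt (1 - \<rho>\<^sup>2)) t * g (s, t) \<partial>lborel) \<partial>lborel)"
proof -
  have "(\<integral>\<^sup>+p. binorm_density \<rho> p * g p \<partial>(lborel \<Otimes>\<^sub>M lborel))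
     = (\<integral>\<^sup>+s. \<integral>\<^sup>+t. std_normal_density s *
          (normal_density (\<rho> * s) (sqrt (1 - \<rho>\<^sup>2)) t * g (s, t)) \<partial>lborel \<partial>lborel)"
    by (subst lborel.nn_integral_fst[symmetric])
       (simp_all add: binorm_density_factor[OF assms(1)] ennreal_mult mult.assoc)
  also have "\<dots> = (\<integral>\<^sup>+s. std_normal_density s *
          (\<integral>\<^sup>+t. normal_density (\<rho> * s) (sqrt (1 - \<rho>\<^sup>2)) t * g (s, t) \<partial>lborel) \<partial>lborel)"
    by (intro nn_integral_cong nn_integral_cmult) simp
  finally show ?thesis .
qed

text \<open>For v = 0 only the marginal of S matters; otherwise, given S = s,
  the combination is N((u + rho v) s, |v| sqrt (1 - rho^2)), and the mixture lemma finishes.\<close>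
lemma nn_integral_binorm_lincomb:
  fixes h :: "real \<Rightarrow> ennreal"
  assumes \<rho>: "\<bar>\<rho>\<bar> < 1" and h[measurable]: "h \<in> borel_measurable borel" and uv: "u \<noteq> 0 \<or> v \<noteq> 0"
  shows "(\<integral>\<^sup>+p. binorm_density \<rho> p * h (u * fst p + v * snd p) \<partial>(lborel \<Otimes>\<^sub>M lborel))
     = (\<integral>\<^sup>+w. normal_density 0 (sqrt (lincomb_variance \<rho> u v)) w * h w \<partial>lborel)"
proof -
  define \<sigma> where "\<sigma> = sqrt (1 - \<rho>\<^sup>2)"
  have "0 < 1 - \<rho>\<^sup>2" using \<rho> by (simp add: abs_square_less_1)
  then have \<sigma>_pos: "0 < \<sigma>" and \<sigma>_sq: "\<sigma>\<^sup>2 = 1 - \<rho>\<^sup>2" unfolding \<sigma>_def by simp_all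
  have "(\<integral>\<^sup>+p. binorm_density \<rho> p * h (u * fst p + v * snd p) \<partial>(lborel \<Otimes>\<^sub>M lborel))
     = (\<integral>\<^sup>+s. std_normal_density s * (\<integral>\<^sup>+t. normal_density (\<rho> * s) \<sigma> t * h (u * s + v * t) \<partial>lborel) \<partial>lborel)"
    unfolding \<sigma>_def by (subst nn_integral_binorm_iterated[OF \<rho>]) simp_all
  also have "\<dots> = (\<integral>\<^sup>+w. normal_density 0 (sqrt (lincomb_variance \<rho> u v)) w * h w \<partial>lborel)"
  proof (cases "v = 0")
    case True
    then have u: "u \<noteq> 0" using uv by simp
    have inner: "(\<integral>\<^sup>+t. normal_density (\<rho> * s) \<sigma> t * h (u * s + v * t) \<partial>lborel) = h (0 + u * s)" for s
    proof -
      have "(\<integral>\<^sup>+t. normal_density (\<rho> * s) \<sigma> t \<partial>lborel) = 1"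
        using \<sigma>_pos by (subst nn_integral_eq_integral) auto
      then show ?thesis using True by (simp add: nn_integral_multc)
    qed
    have "(\<integral>\<^sup>+s. std_normal_density s * (\<integral>\<^sup>+t. normal_density (\<rho> * s) \<sigma> t * h (u * s + v * t) \<partial>lborel) \<partial>lborel)
        = (\<integral>\<^sup>+s. std_normal_density s * h (0 + u * s) \<partial>lborel)"
      unfolding inner ..
    also have "\<dots> = (\<integral>\<^sup>+w. normal_density 0 \<bar>u\<bar> w * h w \<partial>lborel)"
      using nn_integral_normal_affine[OF h u, where \<sigma>=1 and \<mu>=0 and b=0] by simp
    finally show ?thesis using True by (simp add: lincomb_variance_def)
  next
    case False
    define c where "c = u + \<rho> * v"
    define \<tau> where "\<tau> = \<bar>v\<bar> * \<sigma>"
    have \<tau>_pos: "0 < \<tau>" unfolding \<tau>_def using False \<sigma>_pos by simp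
    have inner: "(\<integral>\<^sup>+t. normal_density (\<rho> * s) \<sigma> t * h (u * s + v * t) \<partial>lborel)
        = (\<integral>\<^sup>+w. normal_density (c * s) \<tau> w * h w \<partial>lborel)" for s
      using nn_integral_normal_affine[OF h False \<sigma>_pos, where \<mu>="\<rho> * s" and b="u * s"]
      by (simp add: c_def \<tau>_def algebra_simps)
    have "(\<integral>\<^sup>+s. std_normal_density s * (\<integral>\<^sup>+t. normal_density (\<rho> * s) \<sigma> t * h (u * s + v * t) \<partial>lborel) \<partial>lborel)
        = (\<integral>\<^sup>+s. \<integral>\<^sup>+w. std_normal_density s * (normal_density (c * s) \<tau> w * h w) \<partial>lborel \<partial>lborel)"
      unfolding inner by (intro nn_integral_cong nn_integral_cmult[symmetric]) simp
    also have "\<dots> = (\<integral>\<^sup>+w. \<integral>\<^sup>+s. (std_normal_density s * normal_density (c * s) \<tau> w) * h w \<partial>lborel \<partial>lborel)"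
      by (subst lborel_pair.Fubini') (simp_all add: ennreal_mult mult.assoc, unfold normal_density_def, measurable)
    also have "\<dots> = (\<integral>\<^sup>+w. normal_density 0 (sqrt (c\<^sup>2 + \<tau>\<^sup>2)) w * h w \<partial>lborel)"
    proof (rule nn_integral_cong)
      fix w
      have "(\<integral>\<^sup>+s. (std_normal_density s * normal_density (c * s) \<tau> w) * h w \<partial>lborel)
          = (\<integral>\<^sup>+s. std_normal_density s * normal_density (c * s) \<tau> w \<partial>lborel) * h w"
        by (rule nn_integral_multc) (unfold normal_density_def, measurable)
      then show "(\<integral>\<^sup>+s. (std_normal_density s * normal_density (c * s) \<tau> w) * h w \<partial>lborel)
          = normal_density 0 (sqrt (c\<^sup>2 + \<tau>\<^sup>2)) w * h w"
        by (simp only: nn_integral_normal_mixture[OF \<tau>_pos])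
    qed
    also have "c\<^sup>2 + \<tau>\<^sup>2 = lincomb_variance \<rho> u v"
      unfolding lincomb_variance_eq c_def \<tau>_def power_mult_distrib \<sigma>_sq by simp
    finally show ?thesis .
  qed
  finally show ?thesis .
qed

lemma nn_integral_reflect_plane:
  fixes F :: "real \<times> real \<Rightarrow> ennreal"
  assumes [measurable]: "F \<in> borel_measurable (lborel \<Otimes>\<^sub>M lborel)"
  shows "(\<integral>\<^sup>+p. F (- fst p, - snd p) \<partial>(lborel \<Otimes>\<^sub>M lborel)) = (\<integral>\<^sup>+p. F p \<partial>(lborel \<Otimes>\<^sub>M lborel))"
proof -
  have [measurable]: "F \<in> borel_measurable borel" using assms by (simp add: lborel_prod)
  have "(\<integral>\<^sup>+p. F p \<partial>(lborel \<Otimes>\<^sub>M lborel)) = (\<integral>\<^sup>+p. F p \<partial>lborel)"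
    by (simp add: lborel_prod)
  also have "\<dots> = (\<integral>\<^sup>+p. F p \<partial>density (distr lborel borel (\<lambda>x. 0 + (-1) *\<^sub>R x)) (\<lambda>_. \<bar>-1::real\<bar> ^ DIM(real \<times> real)))"
    by (subst lborel_affine[of "-1" 0]) simp_all
  also have "\<dots> = (\<integral>\<^sup>+p. F (- p) \<partial>lborel)"
    by (simp add: nn_integral_density nn_integral_distr)
  also have "\<dots> = (\<integral>\<^sup>+p. F (- fst p, - snd p) \<partial>(lborel \<Otimes>\<^sub>M lborel))"
    by (simp add: lborel_prod uminus_prod_def)
  finally show ?thesis ..
qed

lemma nn_integral_binorm_reflect:
  fixes g :: "real \<times> real \<Rightarrow> ennreal"
  assumes [measurable]: "g \<in> borel_measurable (lborel \<Otimes>\<^sub>M lborel)"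
  shows "(\<integral>\<^sup>+p. binorm_density \<rho> p * g (- fst p, - snd p) \<partial>(lborel \<Otimes>\<^sub>M lborel))
       = (\<integral>\<^sup>+p. binorm_density \<rho> p * g p \<partial>(lborel \<Otimes>\<^sub>M lborel))"
  using nn_integral_reflect_plane[of "\<lambda>p. binorm_density \<rho> p * g p"]
  by (simp add: binorm_density_even)

lemma nn_integral_binorm_abs_lincomb:
  assumes \<rho>: "\<bar>\<rho>\<bar> < 1"
  shows "(\<integral>\<^sup>+p. binorm_density \<rho> p * ennreal \<bar>u * fst p + v * snd p\<bar> \<partial>(lborel \<Otimes>\<^sub>M lborel))
     = ennreal (sqrt (lincomb_variance \<rho> u v) * sqrt (2 / pi))"
proof (cases "u = 0 \<and> v = 0")
  case True
  then show ?thesis by (simp add: lincomb_variance_def)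
next
  case False
  define \<tau> where "\<tau> = sqrt (lincomb_variance \<rho> u v)"
  have \<tau>_pos: "0 < \<tau>" unfolding \<tau>_def using lincomb_variance_pos[OF \<rho>] False by simp
  have "(\<integral>\<^sup>+p. binorm_density \<rho> p * ennreal \<bar>u * fst p + v * snd p\<bar> \<partial>(lborel \<Otimes>\<^sub>M lborel))
      = (\<integral>\<^sup>+w. normal_density 0 \<tau> w * \<bar>w\<bar> \<partial>lborel)"
    unfolding \<tau>_def using nn_integral_binorm_lincomb[OF \<rho>, of "\<lambda>w. ennreal \<bar>w\<bar>" u v] False
    by (simp add: ennreal_mult)
  also have "\<dots> = ennreal (\<tau> * sqrt (2 / pi))"
  proof -
    have "has_bochner_integral lborel (\<lambda>w. normal_density 0 \<tau> w * \<bar>w\<bar>) (\<tau> * sqrt (2 / pi))"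
      using normal_moment_abs_odd[OF \<tau>_pos, of 0 0] by simp
    then show ?thesis
      by (subst nn_integral_eq_integral)
         (auto simp: has_bochner_integral_iff \<tau>_pos)
  qed
  finally show ?thesis unfolding \<tau>_def .
qed

lemma max_plus_reflected_max:
  fixes a b :: real
  shows "max (max a b) 0 + max (max (- a) (- b)) 0 = \<bar>a / 2\<bar> + \<bar>b / 2\<bar> + \<bar>a / 2 - b / 2\<bar>"
  by (auto simp: max_def abs_if)

lemma ennreal_half_of_double:
  fixes I :: ennreal and R :: real
  assumes "I + I = ennreal (2 * R)" and "0 \<le> R"
  shows "I = ennreal R"
proof -
  have "2 * I = 2 * ennreal R"
    using assms by (simp add: ennreal_mult mult_2[symmetric])
  then show ?thesis by (subst (asm) ennreal_mult_cancel_left) auto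
qed

lemma abs_moments_closed_form:
  assumes \<rho>: "\<bar>\<rho>\<bar> < 1"
  shows "ennreal (sqrt (lincomb_variance \<rho> (a / 2) 0) * sqrt (2 / pi))
      + ennreal (sqrt (lincomb_variance \<rho> 0 (b / 2)) * sqrt (2 / pi))
      + ennreal (sqrt (lincomb_variance \<rho> (a / 2) (- (b / 2))) * sqrt (2 / pi))
    = ennreal (2 * ((\<bar>a\<bar> + \<bar>b\<bar> + sqrt (lincomb_variance \<rho> a (- b))) / (2 * sqrt (2 * pi))))"
proof -
  define k where "k = sqrt (2 / pi)"
  define V where "V = sqrt (lincomb_variance \<rho> a (- b))"
  have V_nonneg: "0 \<le> V" unfolding V_def using lincomb_variance_nonneg[OF \<rho>] by simp
  have "lincomb_variance \<rho> (a / 2) (- (b / 2)) = (1 / 2)\<^sup>2 * lincomb_variance \<rho> a (- b)"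
    by (simp add: lincomb_variance_def power2_eq_square)
  then have by_ab: "sqrt (lincomb_variance \<rho> (a / 2) (- (b / 2))) = V / 2"
    unfolding V_def by (simp add: real_sqrt_mult)
  have by_a: "sqrt (lincomb_variance \<rho> (a / 2) 0) = \<bar>a\<bar> / 2"
    by (simp add: lincomb_variance_def real_sqrt_divide)
  have by_b: "sqrt (lincomb_variance \<rho> 0 (b / 2)) = \<bar>b\<bar> / 2"
    by (simp add: lincomb_variance_def real_sqrt_divide)
  have k: "k = 2 / sqrt (2 * pi)"
    unfolding k_def by (simp add: real_sqrt_divide real_sqrt_mult field_simps)
  then have "0 \<le> k" by simp
  then have "ennreal (\<bar>a\<bar> / 2 * k) + ennreal (\<bar>b\<bar> / 2 * k) + ennreal (V / 2 * k)
      = ennreal (\<bar>a\<bar> / 2 * k + \<bar>b\<bar> / 2 * k + V / 2 * k)"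
    using V_nonneg by (simp add: ennreal_plus)
  also have "\<bar>a\<bar> / 2 * k + \<bar>b\<bar> / 2 * k + V / 2 * k = 2 * ((\<bar>a\<bar> + \<bar>b\<bar> + V) / (2 * sqrt (2 * pi)))"
    unfolding k by (simp add: field_simps)
  finally show ?thesis unfolding by_a by_b by_ab V_def k_def .
qed

text \<open>By reflection symmetry twice the expectation is the expectation of the three absolute values
  from the identity above, each of which is an absolute moment of a linear combination.\<close>
lemma nn_integral_binorm_max:
  assumes \<rho>: "\<bar>\<rho>\<bar> < 1"
  shows "(\<integral>\<^sup>+p. binorm_density \<rho> p * ennreal (max (max (a * fst p) (b * snd p)) 0) \<partial>(lborel \<Otimes>\<^sub>M lborel))
     = ennreal ((\<bar>a\<bar> + \<bar>b\<bar> + sqrt (lincomb_variance \<rho> a (- b))) / (2 * sqrt (2 * pi)))"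
    (is "?I = ennreal ?R")
proof -
  define f where "f p = max (max (a * fst p) (b * snd p)) 0" for p :: "real \<times> real"
  define E where "E g = (\<integral>\<^sup>+p. binorm_density \<rho> p * g p \<partial>(lborel \<Otimes>\<^sub>M lborel))"
    for g :: "real \<times> real \<Rightarrow> ennreal"
  define k where "k = sqrt (2 / pi)"
  let ?abs = "\<lambda>u v p. ennreal \<bar>u * fst p + v * snd p\<bar>"
  have abs_moment: "E (?abs u v) = ennreal (sqrt (lincomb_variance \<rho> u v) * k)" for u v
    unfolding E_def k_def by (rule nn_integral_binorm_abs_lincomb[OF \<rho>])
  have sum_reflected: "ennreal (f p) + ennreal (f (- fst p, - snd p))
      = ?abs (a / 2) 0 p + ?abs 0 (b / 2) p + ?abs (a / 2) (- (b / 2)) p" for p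
  proof -
    have "ennreal (f p) + ennreal (f (- fst p, - snd p)) = ennreal (f p + f (- fst p, - snd p))"
      by (rule ennreal_plus[symmetric]) (simp_all add: f_def)
    also have "f p + f (- fst p, - snd p)
        = \<bar>a / 2 * fst p + 0 * snd p\<bar> + \<bar>0 * fst p + b / 2 * snd p\<bar> + \<bar>a / 2 * fst p + - (b / 2) * snd p\<bar>"
      using max_plus_reflected_max[of "a * fst p" "b * snd p"] unfolding f_def by simp
    finally show ?thesis
      by (simp only: ennreal_plus abs_ge_zero add_nonneg_nonneg)
  qed
  have reflected: "E (\<lambda>p. ennreal (f (- fst p, - snd p))) = E (\<lambda>p. ennreal (f p))"
    unfolding E_def by (rule nn_integral_binorm_reflect) (simp add: f_def)
  have "?I = E (\<lambda>p. ennreal (f p))" unfolding E_def f_def ..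
  then have "?I + ?I = E (\<lambda>p. ennreal (f p)) + E (\<lambda>p. ennreal (f (- fst p, - snd p)))"
    unfolding reflected by simp
  also have "\<dots> = E (\<lambda>p. ennreal (f p) + ennreal (f (- fst p, - snd p)))"
    unfolding E_def distrib_left by (rule nn_integral_add[symmetric]) (simp_all add: f_def)
  also have "\<dots> = E (\<lambda>p. ?abs (a / 2) 0 p + ?abs 0 (b / 2) p + ?abs (a / 2) (- (b / 2)) p)"
    unfolding sum_reflected ..
  also have "\<dots> = E (?abs (a / 2) 0) + E (?abs 0 (b / 2)) + E (?abs (a / 2) (- (b / 2)))"
    unfolding E_def distrib_left by (simp add: nn_integral_add)
  also have "\<dots> = ennreal (sqrt (lincomb_variance \<rho> (a / 2) 0) * k) + ennreal (sqrt (lincomb_variance \<rho> 0 (b / 2)) * k)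
      + ennreal (sqrt (lincomb_variance \<rho> (a / 2) (- (b / 2))) * k)"
    unfolding abs_moment ..
  also have "\<dots> = ennreal (2 * ?R)"
    unfolding k_def by (rule abs_moments_closed_form[OF \<rho>])
  finally have doubled: "?I + ?I = ennreal (2 * ?R)" .
  moreover have "0 \<le> ?R" using lincomb_variance_nonneg[OF \<rho>, of a "- b"] by simp
  ultimately show ?thesis by (rule ennreal_half_of_double)
qed

lemma binorm_expectation_max:
  fixes S T :: "'a \<Rightarrow> real" and a b :: real
  assumes \<rho>: "\<bar>\<rho>\<bar> < 1"
    and dist: "distributed M (lborel \<Otimes>\<^sub>M lborel) (\<lambda>\<omega>. (S \<omega>, T \<omega>)) (\<lambda>p. ennreal (binorm_density \<rho> p))"
  defines "R \<equiv> (\<bar>a\<bar> + \<bar>b\<bar> + sqrt (lincomb_variance \<rho> a (- b))) / (2 * sqrt (2 * pi))"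
  shows "integrable M (\<lambda>\<omega>. max (max (a * S \<omega>) (b * T \<omega>)) 0)
     \<and> (\<integral>\<omega>. max (max (a * S \<omega>) (b * T \<omega>)) 0 \<partial>M) = R"
proof -
  have "(\<lambda>\<omega>. (S \<omega>, T \<omega>)) \<in> measurable M (lborel \<Otimes>\<^sub>M lborel)"
    using distributed_measurable[OF dist] .
  then have [measurable]: "S \<in> borel_measurable M" "T \<in> borel_measurable M"
    by (simp_all add: measurable_pair_iff comp_def)
  have R_nonneg: "0 \<le> R" unfolding R_def using lincomb_variance_nonneg[OF \<rho>] by simp
  have nn: "(\<integral>\<^sup>+\<omega>. ennreal (max (max (a * S \<omega>) (b * T \<omega>)) 0) \<partial>M) = ennreal R"
    using distributed_nn_integral[OF dist, of "\<lambda>p. ennreal (max (max (a * fst p) (b * snd p)) 0)"]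
      nn_integral_binorm_max[OF \<rho>, of a b]
    unfolding R_def by simp
  have "integrable M (\<lambda>\<omega>. max (max (a * S \<omega>) (b * T \<omega>)) 0)"
    by (rule integrableI_nonneg) (simp, simp, subst nn, simp)
  moreover have "(\<integral>\<omega>. max (max (a * S \<omega>) (b * T \<omega>)) 0 \<partial>M) = R"
    by (subst integral_eq_nn_integral) (simp, simp, subst nn, simp add: R_nonneg)
  ultimately show ?thesis ..
qed

lemma pickands_form:
  fixes x y :: real
  assumes "0 \<le> x" "0 \<le> y" "0 < x + y"
  shows "(x + y + sqrt (lincomb_variance \<rho> x (- y))) / 2
       = (1/2) * (x + y) * (1 + sqrt (1 - 2 * (\<rho> + 1) * (x * y) / (x + y)\<^sup>2))"
proof -
  have "lincomb_variance \<rho> x (- y) = (x + y)\<^sup>2 - 2 * (\<rho> + 1) * (x * y)"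
    by (simp add: lincomb_variance_def power2_eq_square algebra_simps)
  then have "1 - 2 * (\<rho> + 1) * (x * y) / (x + y)\<^sup>2 = lincomb_variance \<rho> x (- y) / (x + y)\<^sup>2"
    using assms by (simp add: diff_divide_distrib)
  then have "sqrt (1 - 2 * (\<rho> + 1) * (x * y) / (x + y)\<^sup>2) = sqrt (lincomb_variance \<rho> x (- y)) / (x + y)"
    using assms by (simp add: real_sqrt_divide)
  then show ?thesis using assms by (simp add: field_simps)
qed

theorem mainTheorem10:
  fixes M :: "'a measure" and S T :: "'a \<Rightarrow> real" and \<rho> :: real
  assumes "prob_space M"
    and "-1 < \<rho>" and "\<rho> < 1"
    and "distributed M (lborel \<Otimes>\<^sub>M lborel) (\<lambda>\<omega>. (S \<omega>, T \<omega>))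
           (\<lambda>p. ennreal (binorm_density \<rho> p))"
  defines "A \<equiv> (\<lambda>\<omega>. sqrt (2 * pi) * S \<omega>)"
    and "B \<equiv> (\<lambda>\<omega>. sqrt (2 * pi) * T \<omega>)"
  shows "integrable M (\<lambda>\<omega>. max (A \<omega>) 0) \<and> (\<integral>\<omega>. max (A \<omega>) 0 \<partial>M) = 1 \<and>
         integrable M (\<lambda>\<omega>. max (B \<omega>) 0) \<and> (\<integral>\<omega>. max (B \<omega>) 0 \<partial>M) = 1 \<and>
         (\<forall>x y. 0 \<le> x \<longrightarrow> 0 \<le> y \<longrightarrow> 0 < x + y \<longrightarrow>
           integrable M (\<lambda>\<omega>. max (max (x * A \<omega>) (y * B \<omega>)) 0) \<and>
           (\<integral>\<omega>. max (max (x * A \<omega>) (y * B \<omega>)) 0 \<partial>M)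
             = (1/2) * (x + y) * (1 + sqrt (1 - 2 * (\<rho> + 1) * (x * y) / (x + y)\<^sup>2)))"
proof -
  have \<rho>: "\<bar>\<rho>\<bar> < 1" using assms(2,3) by auto
  define c where "c = sqrt (2 * pi)"
  have c_pos: "0 < c" unfolding c_def by simp
  have expectation: "integrable M (\<lambda>\<omega>. max (max (x * A \<omega>) (y * B \<omega>)) 0)
      \<and> (\<integral>\<omega>. max (max (x * A \<omega>) (y * B \<omega>)) 0 \<partial>M) = (x + y + sqrt (lincomb_variance \<rho> x (- y))) / 2"
    if "0 \<le> x" "0 \<le> y" for x y
  proof -
    have "(\<lambda>\<omega>. max (max (x * A \<omega>) (y * B \<omega>)) 0) = (\<lambda>\<omega>. max (max ((c * x) * S \<omega>) ((c * y) * T \<omega>)) 0)"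
      unfolding A_def B_def c_def by (simp add: mult_ac)
    moreover have "lincomb_variance \<rho> (c * x) (- (c * y)) = c\<^sup>2 * lincomb_variance \<rho> x (- y)"
      by (simp add: lincomb_variance_def power2_eq_square algebra_simps)
    then have "(\<bar>c * x\<bar> + \<bar>c * y\<bar> + sqrt (lincomb_variance \<rho> (c * x) (- (c * y)))) / (2 * c)
        = (x + y + sqrt (lincomb_variance \<rho> x (- y))) / 2"
      using c_pos that by (simp add: real_sqrt_mult abs_mult field_simps)
    ultimately show ?thesis
      using binorm_expectation_max[OF \<rho> assms(4), of "c * x" "c * y", folded c_def] by simp
  qed
  have margins: "(\<lambda>\<omega>. max (A \<omega>) 0) = (\<lambda>\<omega>. max (max (1 * A \<omega>) (0 * B \<omega>)) 0)"
    "(\<lambda>\<omega>. max (B \<omega>) 0) = (\<lambda>\<omega>. max (max (0 * A \<omega>) (1 * B \<omega>)) 0)"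
    by (auto simp: fun_eq_iff max_def)
  have joint: "integrable M (\<lambda>\<omega>. max (max (x * A \<omega>) (y * B \<omega>)) 0)
      \<and> (\<integral>\<omega>. max (max (x * A \<omega>) (y * B \<omega>)) 0 \<partial>M)
        = (1/2) * (x + y) * (1 + sqrt (1 - 2 * (\<rho> + 1) * (x * y) / (x + y)\<^sup>2))"
    if "0 \<le> x" "0 \<le> y" "0 < x + y" for x y
    using expectation[OF that(1,2)] pickands_form[OF that, of \<rho>] by simp
  show ?thesis
    using expectation[of 1 0] expectation[of 0 1] joint
    unfolding margins by (simp add: lincomb_variance_def)
qed

end
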